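(* Let $H$ be a countable group, and suppose $G\le H\le K$ with $G$ finitely generated and $C_K(G)=1$. Then all terms of the normalizer tower of $H$ in $K$ are countable, and therefore the tower has countable height.
   Context: The normalizer tower of $H$ in $K$ is defined by $N^0=H$, $N^{\alpha+1}=N_K(N^\alpha)$ and $N^\alpha=\bigcup_{\beta<\alpha}N^\beta$ for limit ordinals $\alpha$. Its height is the least ordinal $\alpha$ with $N^{\alpha}=N^{\alpha+1}$. $C_K(G)$ is the centralizer of $G$ in $K$. *)

theory Defs
  imports "HOL-Algebra.Algebra" "HOL-Library.Countable_Set"
begin

definition centralizer :: "('a, 'b) monoid_scheme \<Rightarrow> 'a set \<Rightarrow> 'a set" where
  "centralizer K A = {k \<in> carrier K. \<forall>g \<in> A. k \<otimes>\<^bsub>K\<^esub> g = g \<otimes>\<^bsub>K\<^esub> k}"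

text \<open>Ordinals are represented by well-order relations r (on Field r); an element
  i of Field r stands for the ordinal type of its strict initial segment.
  f is the normalizer tower of H in K indexed along r:
  f i = H at the bottom, f i = N_K(f j) if i is the successor of j, and
  f i = union of the earlier terms if i is a limit point.\<close>
definition strict_pred :: "'i rel \<Rightarrow> 'i \<Rightarrow> 'i set" where
  "strict_pred r i = {j. (j, i) \<in> r \<and> j \<noteq> i}"

definition immediate_pred :: "'i rel \<Rightarrow> 'i \<Rightarrow> 'i \<Rightarrow> bool" where
  "immediate_pred r j i \<longleftrightarrow> j \<in> strict_pred r i \<and> (\<forall>k \<in> strict_pred r i. (k, j) \<in> r)"

definition normalizer_tower_on ::
    "('a, 'b) monoid_scheme \<Rightarrow> 'a set \<Rightarrow> 'i rel \<Rightarrow> ('i \<Rightarrow> 'a set) \<Rightarrow> bool" where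
  "normalizer_tower_on K H r f \<longleftrightarrow> Well_order r \<and>
     (\<forall>i \<in> Field r.
        (strict_pred r i = {} \<longrightarrow> f i = H) \<and>
        (\<forall>j. immediate_pred r j i \<longrightarrow> f i = normalizer K (f j)) \<and>
        (strict_pred r i \<noteq> {} \<and> (\<nexists>j. immediate_pred r j i) \<longrightarrow>
            f i = (\<Union>j \<in> strict_pred r i. f j)))"

end

theory Submission
  imports Defs "HOL-Analysis.Finite_Cartesian_Product"
begin

(* Fix a finite generating set S of G. Since C_K(G) = 1, an element x of K is determined by the
   conjugates x s x^-1 of the elements s of S. Hence the sets C_0 = H and
   C_(k+1) = C_k \<union> {x. x S x^-1 \<subseteq> C_k} are countable by induction on k, and so is their
   union C. If a subgroup A \<supseteq> H \<supseteq> S lies in C, then so does N_K(A): an element of N_K(A)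
   conjugates the finitely many elements of S into A, hence into a single C_k. By transfinite
   induction every term of every normalizer tower of H lies in C.

   To bound the height without ordinals, the tower is realised as the least family of sets that
   contains H and is closed under A \<mapsto> A \<union> N_K(A) and under nonempty unions. As in the proof
   of the Bourbaki-Witt theorem, this family is well-ordered by inclusion. Choosing for each
   non-final member A an element of N_K(A) - A injects it into C, so the family is countable
   and its well-order can be transported to nat. *)

lemma (in group) centralizer_subgroup:
  assumes "A \<subseteq> carrier G"
  shows "subgroup (centralizer G A) G"
proof (rule subgroupI)
  show "centralizer G A \<subseteq> carrier G" "centralizer G A \<noteq> {}"
    using assms by (auto simp: centralizer_def intro!: exI[of _ \<one>])
next
  fix z assume z: "z \<in> centralizer G A"
  then have zG: "z \<in> carrier G" by (simp add: centralizer_def)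
  have "inv z \<otimes> a = a \<otimes> inv z" if a: "a \<in> A" for a
  proof -
    have aG: "a \<in> carrier G" using a assms by blast
    have "inv z \<otimes> a = inv z \<otimes> (a \<otimes> z) \<otimes> inv z" using zG aG by (simp add: m_assoc)
    also have "\<dots> = inv z \<otimes> (z \<otimes> a) \<otimes> inv z" using z a by (simp add: centralizer_def)
    also have "\<dots> = a \<otimes> inv z" using zG aG by (simp flip: m_assoc)
    finally show ?thesis .
  qed
  then show "inv z \<in> centralizer G A" using zG by (simp add: centralizer_def)
next
  fix y z assume "y \<in> centralizer G A" "z \<in> centralizer G A"
  then show "y \<otimes> z \<in> centralizer G A"
    using assms by (auto simp: centralizer_def subset_iff) (metis m_assoc)
qed

lemma (in group) centralizer_generate:
  assumes "S \<subseteq> carrier G" "z \<in> carrier G" "\<And>s. s \<in> S \<Longrightarrow> z \<otimes> s = s \<otimes> z"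
  shows "z \<in> centralizer G (generate G S)"
proof -
  have "S \<subseteq> centralizer G {z}"
    using assms by (auto simp: centralizer_def)
  then have "generate G S \<subseteq> centralizer G {z}"
    using centralizer_subgroup assms(2) by (simp add: generate_subgroup_incl)
  then show ?thesis
    using assms(2) by (auto simp: centralizer_def)
qed

lemma (in group) subgroup_subset_normalizer:
  assumes "subgroup A G"
  shows "A \<subseteq> normalizer G A"
  using subgroup.subset[OF normal_imp_subgroup[OF subgroup_in_normalizer[OF assms]]] by simp

lemma (in group) normalizer_conj_mem:
  assumes "A \<subseteq> carrier G" "x \<in> normalizer G A" "a \<in> A"
  shows "x \<otimes> a \<otimes> inv x \<in> A"
proof -
  have "x \<otimes> a \<otimes> inv x \<in> x <# A #> inv x"
    using assms(3) unfolding l_coset_def r_coset_def by auto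
  then show ?thesis
    using assms(1,2) unfolding normalizer_def stabilizer_def by auto
qed

lemma (in group) subgroup_Union_chain:
  assumes "subset.chain {A. subgroup A G} \<C>" "\<C> \<noteq> {}"
  shows "subgroup (\<Union>\<C>) G"
proof (rule subgroupI)
  have sub: "subgroup A G" if "A \<in> \<C>" for A
    using assms(1) that unfolding subset_chain_def by blast
  show "\<Union>\<C> \<subseteq> carrier G"
    using sub subgroup.subset by blast
  obtain A where "A \<in> \<C>"
    using assms(2) by blast
  then show "\<Union>\<C> \<noteq> {}"
    using subgroup.one_closed[OF sub] by blast
  show "inv a \<in> \<Union>\<C>" if a: "a \<in> \<Union>\<C>" for a
  proof -
    obtain A where "A \<in> \<C>" "a \<in> A"
      using a by blast
    then show ?thesis
      using subgroup.m_inv_closed[OF sub] by blast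
  qed
  show "a \<otimes> b \<in> \<Union>\<C>" if ab: "a \<in> \<Union>\<C>" "b \<in> \<Union>\<C>" for a b
  proof -
    have "{a, b} \<subseteq> \<Union>\<C>"
      using ab by blast
    obtain B where B: "B \<in> \<C>" "{a, b} \<subseteq> B"
      by (rule finite_subset_Union_chain[OF _ \<open>{a, b} \<subseteq> \<Union>\<C>\<close> assms(2,1)]) simp
    then have "a \<otimes> b \<in> B"
      using subgroup.m_closed[OF sub[OF B(1)]] by simp
    then show ?thesis
      using B(1) by blast
  qed
qed

definition conjugation_on :: "('a, 'b) monoid_scheme \<Rightarrow> 'a set \<Rightarrow> 'a \<Rightarrow> 'a \<Rightarrow> 'a" where
  "conjugation_on G S x = (\<lambda>s\<in>S. x \<otimes>\<^bsub>G\<^esub> s \<otimes>\<^bsub>G\<^esub> inv\<^bsub>G\<^esub> x)"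

lemma (in group) inj_on_conjugation_on:
  assumes "S \<subseteq> carrier G" "centralizer G (generate G S) = {\<one>}"
  shows "inj_on (conjugation_on G S) (carrier G)"
proof (rule inj_onI)
  fix x y assume x: "x \<in> carrier G" and y: "y \<in> carrier G"
    and eq: "conjugation_on G S x = conjugation_on G S y"
  have "inv y \<otimes> x \<otimes> s = s \<otimes> (inv y \<otimes> x)" if s: "s \<in> S" for s
  proof -
    have sG: "s \<in> carrier G" using s assms(1) by blast
    have "x \<otimes> s \<otimes> inv x = y \<otimes> s \<otimes> inv y"
      using fun_cong[OF eq, of s] s by (simp add: conjugation_on_def)
    then have "x \<otimes> s = y \<otimes> s \<otimes> inv y \<otimes> x"
      using x y sG by (metis inv_solve_right' m_closed inv_closed)
    then show ?thesis using x y sG by (simp add: inv_solve_left' m_assoc)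
  qed
  then have "inv y \<otimes> x \<in> centralizer G (generate G S)"
    using x y assms(1) by (intro centralizer_generate) auto
  then have "inv y \<otimes> x = \<one>" using assms(2) by simp
  then show "x = y" using x y by (metis inv_equality inv_inv inv_closed)
qed

primrec conj_level :: "('a, 'b) monoid_scheme \<Rightarrow> 'a set \<Rightarrow> 'a set \<Rightarrow> nat \<Rightarrow> 'a set" where
  "conj_level G H S 0 = H"
| "conj_level G H S (Suc k) = conj_level G H S k \<union>
     {x \<in> carrier G. conjugation_on G S x \<in> S \<rightarrow>\<^sub>E conj_level G H S k}"

definition conj_closure :: "('a, 'b) monoid_scheme \<Rightarrow> 'a set \<Rightarrow> 'a set \<Rightarrow> 'a set" where
  "conj_closure G H S = (\<Union>k. conj_level G H S k)"

lemma incseq_conj_level: "incseq (conj_level G H S)"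
  by (rule incseq_SucI) simp

lemma countable_conj_closure:
  assumes "countable H" "finite S" "inj_on (conjugation_on G S) (carrier G)"
  shows "countable (conj_closure G H S)"
proof -
  have "countable (conj_level G H S k)" for k
  proof (induction k)
    case 0
    show ?case using assms(1) by simp
  next
    case (Suc k)
    let ?A = "{x \<in> carrier G. conjugation_on G S x \<in> S \<rightarrow>\<^sub>E conj_level G H S k}"
    have "countable (S \<rightarrow>\<^sub>E conj_level G H S k)"
      using assms(2) Suc by (rule countable_PiE)
    then have "countable (conjugation_on G S ` ?A)"
      by (rule countable_subset[rotated]) blast
    moreover have "inj_on (conjugation_on G S) ?A"
      using assms(3) by (rule inj_on_subset) blast
    ultimately have "countable ?A"
      by (rule countable_image_inj_on)
    with Suc show ?case by simp
  qed
  then show ?thesis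
    unfolding conj_closure_def by blast
qed

lemma subset_conj_closure: "H \<subseteq> conj_closure G H S"
  unfolding conj_closure_def by (metis UNIV_I UN_upper conj_level.simps(1))

lemma (in group) normalizer_subset_conj_closure:
  assumes "finite S" "S \<subseteq> A" "A \<subseteq> carrier G" "A \<subseteq> conj_closure G H S"
  shows "normalizer G A \<subseteq> conj_closure G H S"
proof
  fix x assume x: "x \<in> normalizer G A"
  then have "conjugation_on G S x ` S \<subseteq> A"
    using assms(2,3) normalizer_conj_mem by (auto simp: conjugation_on_def)
  then have conj: "conjugation_on G S x ` S \<subseteq> \<Union>(range (conj_level G H S))"
    using assms(4) unfolding conj_closure_def by (rule subset_trans)
  have chain: "subset.chain UNIV (range (conj_level G H S))"
    using incseq_conj_level[of G H S] nle_le[where 'a=nat]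
    unfolding subset_chain_def incseq_def by blast
  obtain B where "B \<in> range (conj_level G H S)" "conjugation_on G S x ` S \<subseteq> B"
    using finite_subset_Union_chain[OF finite_imageI[OF assms(1)] conj _ chain] by blast
  then obtain k where "conjugation_on G S x ` S \<subseteq> conj_level G H S k"
    by blast
  moreover have "x \<in> carrier G"
    using x unfolding normalizer_def stabilizer_def by blast
  ultimately have "x \<in> conj_level G H S (Suc k)"
    by (auto simp: conjugation_on_def)
  then show "x \<in> conj_closure G H S"
    unfolding conj_closure_def by blast
qed

lemma strict_pred_Field: "j \<in> strict_pred r i \<Longrightarrow> j \<in> Field r"
  by (auto simp: strict_pred_def intro: FieldI1)

lemma strict_pred_eq_underS: "strict_pred r i = underS r i"
  by (auto simp: strict_pred_def underS_def)

lemma strict_pred_induct: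
  assumes "Well_order r" "\<And>i. (\<And>j. j \<in> strict_pred r i \<Longrightarrow> P j) \<Longrightarrow> P i"
  shows "P i"
proof (rule wo_rel.well_order_induct[of r])
  show "wo_rel r"
    using assms(1) by (simp add: wo_rel_def)
  show "P i" if "\<forall>j. j \<noteq> i \<and> (j, i) \<in> r \<longrightarrow> P j" for i
    using that assms(2) by (simp add: strict_pred_def)
qed

lemma normalizer_tower_onD:
  assumes "normalizer_tower_on K H r f" "i \<in> Field r"
  shows "strict_pred r i = {} \<Longrightarrow> f i = H"
    and "immediate_pred r j i \<Longrightarrow> f i = normalizer K (f j)"
    and "strict_pred r i \<noteq> {} \<Longrightarrow> \<nexists>j. immediate_pred r j i \<Longrightarrow>
      f i = (\<Union>j \<in> strict_pred r i. f j)"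
  using assms unfolding normalizer_tower_on_def by auto

lemma normalizer_tower_onE:
  assumes "normalizer_tower_on K H r f" "i \<in> Field r"
  obtains (base) "strict_pred r i = {}" "f i = H"
  | (succ) j where "immediate_pred r j i" "f i = normalizer K (f j)"
  | (limit) "strict_pred r i \<noteq> {}" "\<nexists>j. immediate_pred r j i"
      "f i = (\<Union>j \<in> strict_pred r i. f j)"
proof (cases "strict_pred r i = {}")
  case True
  then show thesis
    using base normalizer_tower_onD(1)[OF assms] by blast
next
  case nonempty: False
  show thesis
  proof (cases "\<exists>j. immediate_pred r j i")
    case True
    then obtain j where "immediate_pred r j i" ..
    then show thesis
      using succ normalizer_tower_onD(2)[OF assms] by blast
  next
    case False
    then show thesis
      using limit nonempty normalizer_tower_onD(3)[OF assms nonempty] by blast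
  qed
qed

lemma (in group) subgroup_UN_monotone:
  assumes "Well_order r" "I \<subseteq> Field r" "I \<noteq> {}"
    and "\<And>j. j \<in> I \<Longrightarrow> subgroup (f j) G" "\<And>j l. j \<in> I \<Longrightarrow> (l, j) \<in> r \<Longrightarrow> f l \<subseteq> f j"
  shows "subgroup (\<Union>j \<in> I. f j) G"
proof -
  have "f j \<subseteq> f k \<or> f k \<subseteq> f j" if "j \<in> I" "k \<in> I" for j k
  proof -
    have "(j, k) \<in> r \<or> (k, j) \<in> r"
      using wo_rel.TOTALS[of r] assms(1,2) that unfolding wo_rel_def by blast
    then show ?thesis
      using assms(5) that by blast
  qed
  then have "subset.chain {A. subgroup A G} (f ` I)"
    using assms(4) unfolding subset_chain_def by auto
  then show ?thesis
    using assms(3) subgroup_Union_chain by simp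
qed

lemma (in group) normalizer_tower_on_subgroup:
  assumes "subgroup H G" "normalizer_tower_on G H r f"
  shows "i \<in> Field r \<Longrightarrow> subgroup (f i) G \<and> H \<subseteq> f i \<and> (\<forall>j. (j, i) \<in> r \<longrightarrow> f j \<subseteq> f i)"
proof (induction i rule: strict_pred_induct)
  show "Well_order r" using assms(2) by (simp add: normalizer_tower_on_def)
next
  fix i assume i: "i \<in> Field r"
    and IH: "\<And>j. j \<in> strict_pred r i \<Longrightarrow> j \<in> Field r \<Longrightarrow>
      subgroup (f j) G \<and> H \<subseteq> f j \<and> (\<forall>l. (l, j) \<in> r \<longrightarrow> f l \<subseteq> f j)"
  have below: "j = i \<or> j \<in> strict_pred r i" if "(j, i) \<in> r" for j
    using that by (auto simp: strict_pred_def)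
  from assms(2) i show "subgroup (f i) G \<and> H \<subseteq> f i \<and> (\<forall>j. (j, i) \<in> r \<longrightarrow> f j \<subseteq> f i)"
  proof (cases rule: normalizer_tower_onE)
    case base
    have "f j \<subseteq> f i" if "(j, i) \<in> r" for j
      using below[OF that] base(1) by auto
    then show ?thesis
      using base(2) assms(1) by simp
  next
    case (succ j)
    have j: "j \<in> strict_pred r i" and j_max: "\<And>l. l \<in> strict_pred r i \<Longrightarrow> (l, j) \<in> r"
      using succ(1) unfolding immediate_pred_def by auto
    have fj: "subgroup (f j) G" "H \<subseteq> f j" "\<forall>l. (l, j) \<in> r \<longrightarrow> f l \<subseteq> f j"
      using IH[OF j strict_pred_Field[OF j]] by auto
    have ji: "f j \<subseteq> f i"
      using succ(2) subgroup_subset_normalizer[OF fj(1)] by simp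
    have "f l \<subseteq> f i" if "(l, i) \<in> r" for l
    proof (cases "l = i")
      case False
      then have "(l, j) \<in> r"
        using below[OF that] j_max by simp
      then show ?thesis
        using fj(3) ji by auto
    qed simp
    moreover have "subgroup (f i) G"
      using succ(2) normalizer_imp_subgroup[OF subgroup.subset[OF fj(1)]] by simp
    ultimately show ?thesis
      using fj(2) ji by auto
  next
    case limit
    have IH': "subgroup (f j) G" "H \<subseteq> f j" "\<forall>l. (l, j) \<in> r \<longrightarrow> f l \<subseteq> f j"
      if "j \<in> strict_pred r i" for j
      using IH[OF that strict_pred_Field[OF that]] by auto
    have "Well_order r" "strict_pred r i \<subseteq> Field r"
      using assms(2) strict_pred_Field by (auto simp: normalizer_tower_on_def)
    then have "subgroup (f i) G"
      using subgroup_UN_monotone[of r "strict_pred r i" f] limit(1,3) IH' by simp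
    moreover obtain j where j: "j \<in> strict_pred r i"
      using limit(1) by blast
    moreover have "f l \<subseteq> f i" if "(l, i) \<in> r" for l
      using below[OF that] limit(3) by auto
    ultimately show ?thesis
      using IH'(2)[OF j] limit(3) by auto
  qed
qed

lemma (in group) normalizer_tower_on_subset:
  assumes "subgroup H G" "normalizer_tower_on G H r f" "H \<subseteq> C"
    and closed: "\<And>A. subgroup A G \<Longrightarrow> H \<subseteq> A \<Longrightarrow> A \<subseteq> C \<Longrightarrow> normalizer G A \<subseteq> C"
  shows "i \<in> Field r \<Longrightarrow> f i \<subseteq> C"
proof (induction i rule: strict_pred_induct)
  show "Well_order r" using assms(2) by (simp add: normalizer_tower_on_def)
next
  fix i assume i: "i \<in> Field r"
    and IH: "\<And>j. j \<in> strict_pred r i \<Longrightarrow> j \<in> Field r \<Longrightarrow> f j \<subseteq> C"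
  from assms(2) i show "f i \<subseteq> C"
  proof (cases rule: normalizer_tower_onE)
    case base
    then show ?thesis using assms(3) by simp
  next
    case (succ j)
    then have j: "j \<in> strict_pred r i"
      by (simp add: immediate_pred_def)
    then have "subgroup (f j) G" "H \<subseteq> f j"
      using normalizer_tower_on_subgroup[OF assms(1,2) strict_pred_Field[OF j]] by auto
    then show ?thesis
      using succ(2) closed IH[OF j strict_pred_Field[OF j]] by simp
  next
    case limit
    have "f j \<subseteq> C" if "j \<in> strict_pred r i" for j
      using IH[OF that strict_pred_Field[OF that]] .
    then show ?thesis
      using limit(3) by auto
  qed
qed

lemma dir_image_mem_iff:
  assumes "Well_order r" "inj_on e (Field r)" "a \<in> Field r" "b \<in> Field r"
  shows "(e a, e b) \<in> dir_image r e \<longleftrightarrow> (a, b) \<in> r"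
  using dir_image_iso[OF assms(1,2)] assms(3,4) by (simp add: BNF_Wellorder_Embedding.iso_iff2)

lemma strict_pred_dir_image:
  assumes "Well_order r" "inj_on e (Field r)" "i \<in> Field r"
  shows "strict_pred (dir_image r e) (e i) = e ` strict_pred r i"
  using embed_underS[OF assms(1) _ assms(3), of "dir_image r e" e] dir_image_iso[OF assms(1,2)]
  unfolding strict_pred_eq_underS BNF_Wellorder_Embedding.iso_def bij_betw_def by simp

lemma immediate_pred_dir_image:
  assumes wo: "Well_order r" and inj: "inj_on e (Field r)" and i: "i \<in> Field r" and j: "j \<in> Field r"
  shows "immediate_pred (dir_image r e) (e j) (e i) \<longleftrightarrow> immediate_pred r j i"
proof -
  have "e j \<in> e ` strict_pred r i \<longleftrightarrow> j \<in> strict_pred r i"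
    using inj_on_image_mem_iff[OF inj j] strict_pred_Field by (meson subsetI)
  moreover have "(\<forall>k \<in> e ` strict_pred r i. (k, e j) \<in> dir_image r e) \<longleftrightarrow>
      (\<forall>k \<in> strict_pred r i. (k, j) \<in> r)"
    using dir_image_mem_iff[OF wo inj strict_pred_Field j] by auto
  ultimately show ?thesis
    unfolding immediate_pred_def strict_pred_dir_image[OF wo inj i] by simp
qed

lemma normalizer_tower_on_dir_image:
  assumes tower: "normalizer_tower_on K H r f" and inj: "inj_on e (Field r)"
  shows "normalizer_tower_on K H (dir_image r e) (f \<circ> inv_into (Field r) e)"
proof -
  let ?r = "dir_image r e" and ?f = "f \<circ> inv_into (Field r) e"
  have wo: "Well_order r"
    using tower by (simp add: normalizer_tower_on_def)
  have f: "?f (e i) = f i" if "i \<in> Field r" for i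
    using inv_into_f_f[OF inj that] by simp
  show ?thesis
    unfolding normalizer_tower_on_def
  proof (intro conjI ballI)
    show "Well_order ?r"
      using Well_order_dir_image[OF wo inj] .
    fix n assume "n \<in> Field ?r"
    then obtain i where i: "i \<in> Field r" and n: "n = e i"
      by (auto simp: dir_image_Field)
    have pred_n: "strict_pred ?r n = e ` strict_pred r i"
      using strict_pred_dir_image[OF wo inj i] n by simp
    have f_n: "?f n = f i"
      using f[OF i] n by simp
    have f_pred_n: "?f ` strict_pred ?r n = f ` strict_pred r i"
      unfolding pred_n image_image using f[OF strict_pred_Field] by (intro image_cong) auto
    show "strict_pred ?r n = {} \<longrightarrow> ?f n = H"
      using normalizer_tower_onD(1)[OF tower i] pred_n f_n by simp
    show "\<forall>m. immediate_pred ?r m n \<longrightarrow> ?f n = normalizer K (?f m)"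
    proof (intro allI impI)
      fix m assume m: "immediate_pred ?r m n"
      then have "m \<in> e ` strict_pred r i"
        using pred_n by (simp add: immediate_pred_def)
      then obtain j where j: "j \<in> strict_pred r i" "m = e j"
        by blast
      then have "immediate_pred r j i"
        using m immediate_pred_dir_image[OF wo inj i strict_pred_Field[OF j(1)]] n by simp
      then show "?f n = normalizer K (?f m)"
        using normalizer_tower_onD(2)[OF tower i] f_n f[OF strict_pred_Field[OF j(1)]] j(2) by simp
    qed
    show "strict_pred ?r n \<noteq> {} \<and> (\<nexists>m. immediate_pred ?r m n) \<longrightarrow> ?f n = \<Union>(?f ` strict_pred ?r n)"
    proof
      assume limit: "strict_pred ?r n \<noteq> {} \<and> (\<nexists>m. immediate_pred ?r m n)"
      have "\<not> immediate_pred r j i" for j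
      proof
        assume j: "immediate_pred r j i"
        then have "j \<in> Field r"
          using strict_pred_Field by (auto simp: immediate_pred_def)
        then show False
          using j immediate_pred_dir_image[OF wo inj i] limit n by blast
      qed
      moreover have "strict_pred r i \<noteq> {}"
        using limit pred_n by simp
      ultimately show "?f n = \<Union>(?f ` strict_pred ?r n)"
        using normalizer_tower_onD(3)[OF tower i] f_n f_pred_n by simp
    qed
  qed
qed

inductive_set transfinite_iterates :: "'a set \<Rightarrow> ('a set \<Rightarrow> 'a set) \<Rightarrow> 'a set set"
  for H g where
  base: "H \<in> transfinite_iterates H g"
| step: "A \<in> transfinite_iterates H g \<Longrightarrow> A \<union> g A \<in> transfinite_iterates H g"
| Union: "\<M> \<noteq> {} \<Longrightarrow> (\<And>A. A \<in> \<M> \<Longrightarrow> A \<in> transfinite_iterates H g) \<Longrightarrow>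
    \<Union>\<M> \<in> transfinite_iterates H g"

lemma transfinite_iterates_lower: "A \<in> transfinite_iterates H g \<Longrightarrow> H \<subseteq> A"
  by (induction rule: transfinite_iterates.induct) auto

(* The extreme points of the proof of the Bourbaki-Witt fixed point theorem. *)
definition iterate_extreme :: "'a set \<Rightarrow> ('a set \<Rightarrow> 'a set) \<Rightarrow> 'a set \<Rightarrow> bool" where
  "iterate_extreme H g C \<longleftrightarrow> (\<forall>A \<in> transfinite_iterates H g. A \<subset> C \<longrightarrow> A \<union> g A \<subseteq> C)"

lemma iterate_extreme_dichotomy:
  assumes "iterate_extreme H g C" "C \<in> transfinite_iterates H g"
  shows "A \<in> transfinite_iterates H g \<Longrightarrow> A \<subseteq> C \<or> C \<union> g C \<subseteq> A"
proof (induction rule: transfinite_iterates.induct)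
  case base
  then show ?case using transfinite_iterates_lower[OF assms(2)] by blast
next
  case (step A)
  then show ?case
    using assms(1) unfolding iterate_extreme_def by blast
next
  case (Union \<M>)
  then show ?case by blast
qed

lemma transfinite_iterates_extreme: "C \<in> transfinite_iterates H g \<Longrightarrow> iterate_extreme H g C"
proof (induction rule: transfinite_iterates.induct)
  case base
  then show ?case
    unfolding iterate_extreme_def using transfinite_iterates_lower by blast
next
  case (step C)
  show ?case
    unfolding iterate_extreme_def
  proof (intro ballI impI)
    fix A assume A: "A \<in> transfinite_iterates H g" "A \<subset> C \<union> g C"
    then have "A \<subseteq> C"
      using iterate_extreme_dichotomy[OF step.IH step.hyps] by blast
    then show "A \<union> g A \<subseteq> C \<union> g C"
      using step.IH A(1) unfolding iterate_extreme_def by blast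
  qed
next
  case (Union \<M>)
  show ?case
    unfolding iterate_extreme_def
  proof (intro ballI impI)
    fix A assume A: "A \<in> transfinite_iterates H g" "A \<subset> \<Union>\<M>"
    then obtain M where M: "M \<in> \<M>" "\<not> M \<subseteq> A"
      by blast
    then have "A \<subset> M"
      using iterate_extreme_dichotomy[OF Union.IH Union.hyps(2) A(1)] by blast
    then have "A \<union> g A \<subseteq> M"
      using Union.IH[OF M(1)] A(1) unfolding iterate_extreme_def by blast
    then show "A \<union> g A \<subseteq> \<Union>\<M>"
      using M(1) by blast
  qed
qed

lemma transfinite_iterates_dichotomy:
  "A \<in> transfinite_iterates H g \<Longrightarrow> C \<in> transfinite_iterates H g \<Longrightarrow> A \<subseteq> C \<or> C \<union> g C \<subseteq> A"
  using iterate_extreme_dichotomy transfinite_iterates_extreme by blast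

lemma transfinite_iterates_linear:
  "A \<in> transfinite_iterates H g \<Longrightarrow> C \<in> transfinite_iterates H g \<Longrightarrow> A \<subseteq> C \<or> C \<subseteq> A"
  using transfinite_iterates_dichotomy by blast

lemma transfinite_iterates_le_fixpoint:
  assumes "C \<in> transfinite_iterates H g" "g C \<subseteq> C"
  shows "A \<in> transfinite_iterates H g \<Longrightarrow> A \<subseteq> C"
proof (induction rule: transfinite_iterates.induct)
  case base
  then show ?case using transfinite_iterates_lower[OF assms(1)] .
next
  case (step A)
  then show ?case
    using assms transfinite_iterates_extreme[OF assms(1)] unfolding iterate_extreme_def
    by (cases "A = C") auto
next
  case (Union \<M>)
  then show ?case by blast
qed

lemma transfinite_iterates_least:
  assumes "\<S> \<subseteq> transfinite_iterates H g" "\<S> \<noteq> {}"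
  shows "\<exists>Y \<in> \<S>. \<forall>S \<in> \<S>. Y \<subseteq> S"
proof -
  define \<D> where "\<D> = {A \<in> transfinite_iterates H g. \<forall>S \<in> \<S>. A \<subseteq> S}"
  define Y where "Y = \<Union>\<D>"
  have "H \<subseteq> S" if "S \<in> \<S>" for S
    using transfinite_iterates_lower[of S H g] that assms(1) by blast
  then have "H \<in> \<D>"
    unfolding \<D>_def using transfinite_iterates.base by blast
  then have Y: "Y \<in> transfinite_iterates H g"
    unfolding Y_def \<D>_def by (intro transfinite_iterates.Union) auto
  have Y_lower: "Y \<subseteq> S" if "S \<in> \<S>" for S
    using that unfolding Y_def \<D>_def by blast
  show ?thesis
  proof (cases "Y \<in> \<S>")
    case True
    then show ?thesis using Y_lower by blast
  next
    case False
    have "Y \<union> g Y \<subseteq> S" if S: "S \<in> \<S>" for S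
    proof -
      have "\<not> S \<subseteq> Y"
        using subset_antisym[OF _ Y_lower[OF S]] S False by blast
      then show ?thesis
        using transfinite_iterates_dichotomy[OF _ Y] assms(1) S by blast
    qed
    then have "Y \<union> g Y \<in> \<D>"
      using transfinite_iterates.step[OF Y] unfolding \<D>_def by blast
    then have "g Y \<subseteq> Y"
      using Union_upper[of "Y \<union> g Y" \<D>] unfolding Y_def by simp
    obtain S where S: "S \<in> \<S>"
      using assms(2) by blast
    then have "S \<subseteq> Y"
      using transfinite_iterates_le_fixpoint[OF Y \<open>g Y \<subseteq> Y\<close>] assms(1) by blast
    then have "S = Y"
      using subset_antisym Y_lower[OF S] by blast
    then show ?thesis
      using False S by blast
  qed
qed

definition inclusion_on :: "'a set set \<Rightarrow> 'a set rel" where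
  "inclusion_on \<T> = {(A, B). A \<in> \<T> \<and> B \<in> \<T> \<and> A \<subseteq> B}"

lemma Field_inclusion_on: "Field (inclusion_on \<T>) = \<T>"
  unfolding inclusion_on_def Field_def by auto

lemma strict_pred_inclusion_on:
  "B \<in> \<T> \<Longrightarrow> strict_pred (inclusion_on \<T>) B = {A \<in> \<T>. A \<subset> B}"
  unfolding strict_pred_def inclusion_on_def by auto

lemma immediate_pred_inclusion_on:
  "B \<in> \<T> \<Longrightarrow> immediate_pred (inclusion_on \<T>) A B \<longleftrightarrow>
     A \<in> \<T> \<and> A \<subset> B \<and> (\<forall>C \<in> \<T>. C \<subset> B \<longrightarrow> C \<subseteq> A)"
  unfolding immediate_pred_def strict_pred_inclusion_on by (auto simp: inclusion_on_def)

lemma Well_order_transfinite_iterates: "Well_order (inclusion_on (transfinite_iterates H g))"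
proof -
  have "linear_order_on (transfinite_iterates H g) (inclusion_on (transfinite_iterates H g))"
    unfolding linear_order_on_def partial_order_on_def preorder_on_def refl_on_def
      trans_def antisym_def total_on_def inclusion_on_def
    using transfinite_iterates_linear by blast
  moreover have "wf (inclusion_on (transfinite_iterates H g) - Id)"
    unfolding wf_eq_minimal
  proof (intro allI impI)
    fix \<Q> :: "'a set set" and A assume "A \<in> \<Q>"
    show "\<exists>Z \<in> \<Q>. \<forall>Y. (Y, Z) \<in> inclusion_on (transfinite_iterates H g) - Id \<longrightarrow> Y \<notin> \<Q>"
    proof (cases "\<Q> \<inter> transfinite_iterates H g = {}")
      case True
      then show ?thesis
        using \<open>A \<in> \<Q>\<close> unfolding inclusion_on_def by blast
    next
      case False
      then obtain Z where "Z \<in> \<Q> \<inter> transfinite_iterates H g" "\<forall>S \<in> \<Q> \<inter> transfinite_iterates H g. Z \<subseteq> S"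
        using transfinite_iterates_least[of "\<Q> \<inter> transfinite_iterates H g" H g] by blast
      then show ?thesis
        unfolding inclusion_on_def by blast
    qed
  qed
  ultimately show ?thesis
    unfolding well_order_on_def Field_inclusion_on by blast
qed

lemma transfinite_iterates_succ:
  assumes A: "A \<in> transfinite_iterates H g" and B: "B \<in> transfinite_iterates H g" "A \<subset> B"
    and A_max: "\<forall>C \<in> transfinite_iterates H g. C \<subset> B \<longrightarrow> C \<subseteq> A"
  shows "B = A \<union> g A"
proof -
  have "A \<union> g A \<subseteq> B"
    using transfinite_iterates_dichotomy[OF B(1) A] B(2) by blast
  moreover have "\<not> A \<union> g A \<subset> B"
  proof
    assume "A \<union> g A \<subset> B"
    then have "g A \<subseteq> A"
      using A_max transfinite_iterates.step[OF A] by blast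
    then have "B \<subseteq> A"
      using transfinite_iterates_le_fixpoint[OF A _ B(1)] by blast
    then show False
      using B(2) by blast
  qed
  ultimately show ?thesis
    by blast
qed

lemma transfinite_iterates_limit:
  assumes B: "B \<in> transfinite_iterates H g" and nonempty: "\<exists>C \<in> transfinite_iterates H g. C \<subset> B"
    and no_max: "\<nexists>A. A \<in> transfinite_iterates H g \<and> A \<subset> B \<and>
      (\<forall>C \<in> transfinite_iterates H g. C \<subset> B \<longrightarrow> C \<subseteq> A)"
  shows "B = \<Union>{C \<in> transfinite_iterates H g. C \<subset> B}"
proof (rule ccontr)
  let ?U = "\<Union>{C \<in> transfinite_iterates H g. C \<subset> B}"
  assume "B \<noteq> ?U"
  then have "?U \<subset> B"
    by blast
  moreover have "?U \<in> transfinite_iterates H g"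
    using nonempty by (intro transfinite_iterates.Union) auto
  ultimately show False
    using no_max by blast
qed

lemma Union_transfinite_iterates:
  "\<Union>(transfinite_iterates H g) \<in> transfinite_iterates H g"
  using transfinite_iterates.base by (intro transfinite_iterates.Union) auto

lemma fixpoint_Union_transfinite_iterates:
  "g (\<Union>(transfinite_iterates H g)) \<subseteq> \<Union>(transfinite_iterates H g)"
  using transfinite_iterates.step[OF Union_transfinite_iterates] by blast

lemma transfinite_iterates_fixpoint_eq_Union:
  assumes "A \<in> transfinite_iterates H g" "g A \<subseteq> A"
  shows "A = \<Union>(transfinite_iterates H g)"
  using transfinite_iterates_le_fixpoint[OF assms] assms(1) by blast

lemma countable_transfinite_iterates:
  assumes "countable (\<Union>(transfinite_iterates H g))"
  shows "countable (transfinite_iterates H g)"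
proof -
  let ?T = "transfinite_iterates H g"
  let ?top = "\<Union>?T"
  have "\<exists>p. p \<in> g A - A" if "A \<in> ?T - {?top}" for A
    using transfinite_iterates_fixpoint_eq_Union[of A H g] that by blast
  then obtain p where p: "\<And>A. A \<in> ?T - {?top} \<Longrightarrow> p A \<in> g A - A"
    by metis
  have "inj_on p (?T - {?top})"
  proof (rule inj_onI)
    fix A B assume A: "A \<in> ?T - {?top}" and B: "B \<in> ?T - {?top}" and eq: "p A = p B"
    have "\<not> A \<union> g A \<subseteq> B" "\<not> B \<union> g B \<subseteq> A"
      using p[OF A] p[OF B] eq by auto
    then have "B \<subseteq> A" "A \<subseteq> B"
      using transfinite_iterates_dichotomy[of B H g A] transfinite_iterates_dichotomy[of A H g B] A B
      by blast+
    then show "A = B"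
      by (rule subset_antisym[rotated])
  qed
  moreover have "p ` (?T - {?top}) \<subseteq> ?top"
  proof
    fix q assume "q \<in> p ` (?T - {?top})"
    then obtain A where A: "A \<in> ?T - {?top}" "q = p A"
      by blast
    then have "q \<in> A \<union> g A"
      using p by blast
    moreover have "A \<union> g A \<in> ?T"
      using A(1) transfinite_iterates.step by blast
    ultimately show "q \<in> ?top"
      by blast
  qed
  ultimately have "countable (?T - {?top})"
    using assms countable_subset countable_image_inj_on by metis
  then show ?thesis
    by simp
qed

lemma (in group) subgroup_transfinite_iterates:
  assumes "subgroup H G"
  shows "A \<in> transfinite_iterates H (normalizer G) \<Longrightarrow> subgroup A G"
proof (induction rule: transfinite_iterates.induct)
  case base
  then show ?case using assms .
next
  case (step A)
  then have "A \<union> normalizer G A = normalizer G A"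
    using subgroup_subset_normalizer by blast
  then show ?case
    using normalizer_imp_subgroup[OF subgroup.subset[OF step.IH]] by simp
next
  case (Union \<M>)
  have "subset.chain {A. subgroup A G} \<M>"
    using Union.IH Union.hyps(2) transfinite_iterates_linear unfolding subset_chain_def by blast
  then show ?case
    using Union.hyps(1) by (rule subgroup_Union_chain)
qed

lemma (in group) normalizer_tower_on_transfinite_iterates:
  assumes "subgroup H G"
  shows "normalizer_tower_on G H (inclusion_on (transfinite_iterates H (normalizer G))) id"
  unfolding normalizer_tower_on_def
proof (intro conjI ballI)
  let ?T = "transfinite_iterates H (normalizer G)"
  show "Well_order (inclusion_on ?T)"
    by (rule Well_order_transfinite_iterates)
  fix B assume "B \<in> Field (inclusion_on ?T)"
  then have B: "B \<in> ?T"
    by (simp add: Field_inclusion_on)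
  show "strict_pred (inclusion_on ?T) B = {} \<longrightarrow> id B = H"
    using strict_pred_inclusion_on[OF B] transfinite_iterates_lower[OF B]
      transfinite_iterates.base[of H "normalizer G"] by auto
  show "\<forall>A. immediate_pred (inclusion_on ?T) A B \<longrightarrow> id B = normalizer G (id A)"
  proof (intro allI impI)
    fix A assume "immediate_pred (inclusion_on ?T) A B"
    then have A: "A \<in> ?T" "A \<subset> B" "\<forall>C \<in> ?T. C \<subset> B \<longrightarrow> C \<subseteq> A"
      using immediate_pred_inclusion_on[OF B] by auto
    have "B = A \<union> normalizer G A"
      using transfinite_iterates_succ[OF A(1) B A(2,3)] .
    moreover have "A \<subseteq> normalizer G A"
      using subgroup_subset_normalizer[OF subgroup_transfinite_iterates[OF assms A(1)]] .
    ultimately show "id B = normalizer G (id A)"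
      by auto
  qed
  show "strict_pred (inclusion_on ?T) B \<noteq> {} \<and> (\<nexists>A. immediate_pred (inclusion_on ?T) A B) \<longrightarrow>
      id B = \<Union>(id ` strict_pred (inclusion_on ?T) B)"
    using transfinite_iterates_limit[OF B] strict_pred_inclusion_on[OF B]
      immediate_pred_inclusion_on[OF B] by auto
qed

lemma (in group) normalizer_Union_transfinite_iterates:
  assumes "subgroup H G"
  shows "normalizer G (\<Union>(transfinite_iterates H (normalizer G))) = \<Union>(transfinite_iterates H (normalizer G))"
proof (rule subset_antisym)
  show "normalizer G (\<Union>(transfinite_iterates H (normalizer G))) \<subseteq> \<Union>(transfinite_iterates H (normalizer G))"
    by (rule fixpoint_Union_transfinite_iterates)
  show "\<Union>(transfinite_iterates H (normalizer G)) \<subseteq> normalizer G (\<Union>(transfinite_iterates H (normalizer G)))"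
    using subgroup_subset_normalizer subgroup_transfinite_iterates[OF assms Union_transfinite_iterates] .
qed

lemma (in group) ex_normalizer_tower_on_nat_fixpoint:
  assumes H: "subgroup H G" and C: "countable C" "H \<subseteq> C"
    and closed: "\<And>A. subgroup A G \<Longrightarrow> H \<subseteq> A \<Longrightarrow> A \<subseteq> C \<Longrightarrow> normalizer G A \<subseteq> C"
  shows "\<exists>(r :: nat rel) f i. normalizer_tower_on G H r f \<and> i \<in> Field r \<and> normalizer G (f i) = f i"
proof -
  let ?T = "transfinite_iterates H (normalizer G)"
  let ?e = "to_nat_on ?T"
  have tower: "normalizer_tower_on G H (inclusion_on ?T) id"
    using normalizer_tower_on_transfinite_iterates[OF H] .
  have "\<Union>?T \<subseteq> C"
    using normalizer_tower_on_subset[OF H tower C(2) closed] by (auto simp: Field_inclusion_on)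
  then have "countable ?T"
    using countable_transfinite_iterates countable_subset C(1) by blast
  then have inj: "inj_on ?e (Field (inclusion_on ?T))"
    by (simp add: Field_inclusion_on inj_on_to_nat_on)
  have "normalizer_tower_on G H (dir_image (inclusion_on ?T) ?e) (inv_into ?T ?e)"
    using normalizer_tower_on_dir_image[OF tower inj] by (simp add: Field_inclusion_on)
  moreover have "?e (\<Union>?T) \<in> Field (dir_image (inclusion_on ?T) ?e)"
    by (simp add: dir_image_Field Field_inclusion_on Union_transfinite_iterates)
  moreover have "inv_into ?T ?e (?e (\<Union>?T)) = \<Union>?T"
    using inv_into_f_f inj Union_transfinite_iterates by (metis Field_inclusion_on)
  ultimately show ?thesis
    using normalizer_Union_transfinite_iterates[OF H] by metis
qed

theorem proposition1p6:
  fixes K :: "('a, 'b) monoid_scheme" and G H :: "'a set"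
  assumes "group K"
    and "subgroup H K" and "subgroup G K" and "G \<subseteq> H"
    and "countable H"
    and "\<exists>S. finite S \<and> S \<subseteq> carrier K \<and> generate K S = G"
    and "centralizer K G = {\<one>\<^bsub>K\<^esub>}"
  shows "(\<forall>(r :: 'i rel) f. normalizer_tower_on K H r f \<longrightarrow>
            (\<forall>i \<in> Field r. countable (f i)))
       \<and> (\<exists>(r :: nat rel) f i. normalizer_tower_on K H r f \<and> countable (Field r)
            \<and> i \<in> Field r \<and> normalizer K (f i) = f i)"
proof -
  interpret K: group K by fact
  obtain S where S: "finite S" "S \<subseteq> carrier K" "generate K S = G"
    using assms(6) by blast
  have "S \<subseteq> generate K S"
    by (auto intro: generate.incl)
  then have "S \<subseteq> H"
    using S(3) assms(4) by simp
  let ?C = "conj_closure K H S"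
  have countable_C: "countable ?C"
    using countable_conj_closure[OF assms(5) S(1) K.inj_on_conjugation_on[OF S(2)]] S(3) assms(7)
    by simp
  have closed: "normalizer K A \<subseteq> ?C" if "subgroup A K" "H \<subseteq> A" "A \<subseteq> ?C" for A
    using K.normalizer_subset_conj_closure[OF S(1) _ subgroup.subset[OF that(1)] that(3)]
      \<open>S \<subseteq> H\<close> that(2) by simp
  show ?thesis
  proof (intro conjI allI impI ballI)
    fix r :: "'i rel" and f i
    assume tower: "normalizer_tower_on K H r f" and i: "i \<in> Field r"
    have "f i \<subseteq> ?C"
      using K.normalizer_tower_on_subset[OF assms(2) tower subset_conj_closure closed i] .
    then show "countable (f i)"
      using countable_C by (rule countable_subset)
  next
    obtain r :: "nat rel" and f i
      where "normalizer_tower_on K H r f" "i \<in> Field r" "normalizer K (f i) = f i"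
      using K.ex_normalizer_tower_on_nat_fixpoint[OF assms(2) countable_C subset_conj_closure closed]
      by blast
    moreover have "countable (Field r)"
      by (rule countable_subset[OF subset_UNIV countableI_type])
    ultimately show "\<exists>(r :: nat rel) f i. normalizer_tower_on K H r f \<and> countable (Field r)
        \<and> i \<in> Field r \<and> normalizer K (f i) = f i"
      by blast
  qed
qed

end
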